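(* Let $p$ be an odd prime and $k$ a positive integer. Then $v_p(g_{k,U})=\sum_{\ell=1}^\infty\Big(\Big[\frac{k^2}{p^\ell}\Big]+(2k-p^\ell)\Big[\frac{k-1}{p^\ell}\Big]+\Big(\frac{p^\ell}{2}-2k\Big)\Big[\frac{2k-1}{p^\ell}\Big]-p^\ell\Big[\frac{k-1}{p^\ell}\Big]^2+\frac{p^\ell}{2}\Big[\frac{2k-1}{p^\ell}\Big]^2\Big)$ and $v_p(g_{k,O})=\sum_{\ell=1}^\infty\Big(\Big[\frac{\frac12k(k-1)}{p^\ell}\Big]-\big(k-\tfrac12\big)\Big[\frac{2k-3}{p^\ell}\Big]_2+\frac{p^\ell}{2}\Big[\frac{2k-3}{p^\ell}\Big]_2^2\Big)$.
   Context: $v_p(n)$ is the exponent of $p$ in the rational number $n$; $[x]$ is the floor of $x$; $[x]_2=\big[\tfrac12([x]+1)\big]$. Let $B_U(\lambda)=\lambda^2$, $B_O(\lambda)=\tfrac12\lambda(\lambda-1)$. Define $G_U(\lambda)=\lim_{N\to\infty}N^{-\lambda^2}\prod_{j=1}^{N}\frac{\Gamma(j)\Gamma(j+2\lambda)}{\Gamma(j+\lambda)^2}$, $G_O(\lambda)=\tfrac12\lim_{N\to\infty}N^{-\lambda(\lambda-1)/2}\,2^{2N\lambda}\prod_{j=1}^{N}\frac{\Gamma(N+j-1)\Gamma(j-\frac12+\lambda)}{\Gamma(N+j-1+\lambda)\Gamma(j-\frac12)}$, and $g_{\lambda,X}=\Gamma(1+B_X(\lambda))G_X(\lambda)$ for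 $X\in\{U,O\}$. *)

theory Defs
  imports "HOL-Analysis.Analysis" "HOL-Computational_Algebra.Primes"
begin

definition vp :: "nat \<Rightarrow> rat \<Rightarrow> int" where
  "vp p q = int (multiplicity (int p) (fst (quotient_of q)))
            - int (multiplicity (int p) (snd (quotient_of q)))"

definition B_U :: "real \<Rightarrow> real" where "B_U x = x^2"
definition B_O :: "real \<Rightarrow> real" where "B_O x = x * (x - 1) / 2"

definition G_U :: "real \<Rightarrow> real" where
  "G_U x = lim (\<lambda>N. real N powr (- (x^2)) *
      (\<Prod>j=1..N. Gamma (real j) * Gamma (real j + 2*x) / (Gamma (real j + x))^2))"

definition G_O :: "real \<Rightarrow> real" where
  "G_O x = 1/2 * lim (\<lambda>N. real N powr (- (x*(x-1)/2)) * 2 powr (2 * real N * x) *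
      (\<Prod>j=1..N. Gamma (real N + real j - 1) * Gamma (real j - 1/2 + x)
                 / (Gamma (real N + real j - 1 + x) * Gamma (real j - 1/2))))"

definition g_U :: "real \<Rightarrow> real" where "g_U x = Gamma (1 + B_U x) * G_U x"
definition g_O :: "real \<Rightarrow> real" where "g_O x = Gamma (1 + B_O x) * G_O x"

definition floor2 :: "real \<Rightarrow> int" where
  "floor2 x = \<lfloor>(real_of_int \<lfloor>x\<rfloor> + 1) / 2\<rfloor>"

end

theory Submission
  imports Defs "HOL-Real_Asymp.Real_Asymp"
begin

(* For a positive integer k both Gamma products can be evaluated in closed form. Writing each
   factor as a quotient of Pochhammer symbols and exchanging the order of the resulting double
   products gives G_U(k) = prod_{i<k} i!/(k+i)! and G_O(k) = 1/2 prod_{i<k} 2^(i+1) i!/(2i)!;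
   the normalising powers of N and of 2 are exactly what is needed for the leftover Pochhammer
   quotients to converge. So g_U(k) and g_O(k) are quotients of products of factorials and
   powers of 2, and Legendre's formula v_p(n!) = sum_l [n/p^l] writes their valuations as series
   over l. For fixed P = p^l the summands collapse to the quadratic expressions of the statement
   by the closed form 2 sum_{j<n} [j/P] = q (2n - P (q+1)), q = [(n-1)/P], combined in the
   orthogonal case with Hermite's identity [2m/P] - [m/P] = [(m + (P-1)/2)/P] for odd P. *)

section \<open>The p-adic valuation of rationals\<close>

lemma vp_of_int: "vp p (of_int a) = int (multiplicity (int p) a)"
  by (simp add: vp_def)

lemma vp_of_int_divide:
  fixes a b :: int
  assumes "prime p" "a \<noteq> 0" "b \<noteq> 0"
  shows "vp p (of_int a / of_int b) = int (multiplicity (int p) a) - int (multiplicity (int p) b)"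
proof -
  obtain n d where nd: "quotient_of (of_int a / of_int b) = (n, d)"
    by (cases "quotient_of (of_int a / of_int b)")
  have "d > 0" using quotient_of_denom_pos[OF nd] .
  have "(of_int a / of_int b :: rat) = of_int n / of_int d"
    using quotient_of_div[OF nd] .
  then have "(of_int (a * d) :: rat) = of_int (n * b)"
    using assms \<open>d > 0\<close> by (simp add: field_simps)
  then have "a * d = n * b" by (simp only: of_int_eq_iff)
  moreover have "n \<noteq> 0" using calculation assms \<open>d > 0\<close> by auto
  moreover have "prime_elem (int p)" using assms(1) by simp
  ultimately have "multiplicity (int p) a + multiplicity (int p) d
      = multiplicity (int p) n + multiplicity (int p) b"
    using assms \<open>d > 0\<close> by (metis prime_elem_multiplicity_mult_distrib less_irrefl)
  then show ?thesis by (simp add: vp_def nd)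
qed

lemma rat_of_int_quotientE:
  fixes x :: rat
  assumes "x \<noteq> 0"
  obtains a b :: int where "a \<noteq> 0" "b \<noteq> 0" "x = of_int a / of_int b"
proof -
  obtain a b where "quotient_of x = (a, b)" by (cases "quotient_of x")
  then have "x = of_int a / of_int b" "b > 0"
    by (simp_all add: quotient_of_div quotient_of_denom_pos)
  with assms show ?thesis by (intro that) auto
qed

lemma vp_mult:
  assumes "prime p" "x \<noteq> 0" "y \<noteq> 0"
  shows "vp p (x * y) = vp p x + vp p y"
proof -
  obtain a b where ab: "a \<noteq> 0" "b \<noteq> 0" "x = of_int a / of_int b"
    using rat_of_int_quotientE[OF assms(2)] .
  obtain c d where cd: "c \<noteq> 0" "d \<noteq> 0" "y = of_int c / of_int d"
    using rat_of_int_quotientE[OF assms(3)] .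
  have xy: "x * y = of_int (a * c) / of_int (b * d)" by (simp add: ab cd)
  have "vp p (x * y) = int (multiplicity (int p) (a * c)) - int (multiplicity (int p) (b * d))"
    unfolding xy using assms(1) ab cd by (intro vp_of_int_divide) auto
  also have "\<dots> = vp p x + vp p y"
    using assms(1) ab cd by (simp add: vp_of_int_divide prime_elem_multiplicity_mult_distrib)
  finally show ?thesis .
qed

lemma vp_inverse:
  assumes "prime p" "x \<noteq> 0"
  shows "vp p (inverse x) = - vp p x"
proof -
  obtain a b where ab: "a \<noteq> 0" "b \<noteq> 0" "x = of_int a / of_int b"
    using rat_of_int_quotientE[OF assms(2)] .
  then have "inverse x = of_int b / of_int a" by simp
  with ab assms(1) show ?thesis by (simp add: vp_of_int_divide)
qed

lemma vp_divide:
  assumes "prime p" "x \<noteq> 0" "y \<noteq> 0"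
  shows "vp p (x / y) = vp p x - vp p y"
  using assms by (simp add: divide_inverse vp_mult vp_inverse)

lemma vp_prod:
  assumes "prime p" "\<And>i. i \<in> A \<Longrightarrow> f i \<noteq> 0"
  shows "vp p (\<Prod>i\<in>A. f i) = (\<Sum>i\<in>A. vp p (f i))"
  using assms(2)
proof (induction A rule: infinite_finite_induct)
  case (insert i A)
  then show ?case by (simp add: vp_mult[OF assms(1)])
qed (simp_all add: vp_def)

lemma vp_power_two:
  assumes "prime p" "odd p"
  shows "vp p (2 ^ n) = 0"
proof -
  have "\<not> p dvd 2"
  proof
    assume "p dvd 2"
    then have "p \<le> 2" by (simp add: dvd_imp_le)
    with prime_ge_2_nat[OF assms(1)] assms(2) show False by simp
  qed
  then have "\<not> int p dvd 2"
    by (metis of_nat_dvd_iff of_nat_numeral)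
  then have "\<not> int p dvd 2 ^ n"
    using assms(1) prime_dvd_power[of "int p" 2 n] by auto
  then show ?thesis
    using vp_of_int[of p "2 ^ n"] by (simp add: not_dvd_imp_multiplicity_0)
qed

section \<open>Legendre's formula\<close>

lemma prime_power_dvd_sums:
  fixes m :: nat
  assumes "prime p" "m > 0"
  shows "(\<lambda>l. of_bool (p ^ Suc l dvd m) :: real) sums real (multiplicity (int p) (int m))"
proof -
  have "p ^ Suc l dvd m \<longleftrightarrow> l \<in> {..<multiplicity (int p) (int m)}" for l
  proof -
    have "p ^ Suc l dvd m \<longleftrightarrow> int p ^ Suc l dvd int m"
      by (metis of_nat_dvd_iff of_nat_power)
    also have "\<dots> \<longleftrightarrow> Suc l \<le> multiplicity (int p) (int m)"
      using assms by (intro power_dvd_iff_le_multiplicity) (auto simp: prime_gt_1_nat)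
    finally show ?thesis by (simp add: Suc_le_eq)
  qed
  then show ?thesis
    using sums_If_finite_set[of "{..<multiplicity (int p) (int m)}" "\<lambda>_. 1 :: real"]
    by (simp add: of_bool_def)
qed

theorem legendre_fact_sums:
  assumes "prime p"
  shows "(\<lambda>l. real (n div p ^ Suc l)) sums real (multiplicity (int p) (fact n :: int))"
proof (induction n)
  case 0
  then show ?case by simp
next
  case (Suc n)
  have "multiplicity (int p) (fact (Suc n) :: int)
      = multiplicity (int p) (int (Suc n)) + multiplicity (int p) (fact n :: int)"
    using assms by (simp add: fact_Suc prime_elem_multiplicity_mult_distrib del: of_nat_Suc)
  moreover have "Suc n div p ^ Suc l = of_bool (p ^ Suc l dvd Suc n) + n div p ^ Suc l" for l
    by (simp add: div_Suc dvd_eq_mod_eq_0)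
  ultimately show ?case
    using sums_add[OF prime_power_dvd_sums[OF assms, of "Suc n"] Suc.IH] by simp
qed

lemma vp_fact_sums:
  assumes "prime p"
  shows "(\<lambda>l. real (n div p ^ Suc l)) sums real_of_int (vp p (fact n))"
  using legendre_fact_sums[OF assms, of n] vp_of_int[of p "fact n"] by simp

section \<open>Sums of floors\<close>

lemma sum_lessThan_shift:
  fixes f :: "nat \<Rightarrow> 'a::ab_group_add"
  shows "(\<Sum>i<n. f (m + i)) = (\<Sum>j<m + n. f j) - (\<Sum>j<m. f j)"
  by (induction n) (simp_all add: add_ac)

lemma sum_lessThan_div_eq:
  fixes P n :: nat
  assumes "P > 0"
  defines "q \<equiv> (n - 1) div P"
  shows "2 * (\<Sum>j<n. real (j div P)) = real q * (2 * real n - real P * (real q + 1))"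
  unfolding q_def
proof (induction n)
  case (Suc n)
  show ?case
  proof (cases "n = 0")
    case False
    define q where "q = (n - 1) div P"
    have "n div P = q + of_bool (P dvd n)"
      using div_Suc[of "n - 1" P] False by (simp add: q_def dvd_eq_mod_eq_0)
    show ?thesis
    proof (cases "P dvd n")
      case True
      with \<open>n div P = q + of_bool (P dvd n)\<close> have "n div P = q + 1" by simp
      moreover have "n = P * (q + 1)"
        using True calculation by (metis dvd_mult_div_cancel)
      then have "real n = real P * (real q + 1)" by (simp add: algebra_simps)
      ultimately show ?thesis
        using Suc.IH unfolding q_def[symmetric] by (simp add: algebra_simps)
    next
      case False
      with \<open>n div P = q + of_bool (P dvd n)\<close> show ?thesis
        using Suc.IH unfolding q_def[symmetric] by (simp add: algebra_simps)
    qed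
  qed simp
qed simp

lemma hermite_div_odd:
  fixes m t :: nat
  shows "2 * m div (2 * t + 1) = m div (2 * t + 1) + (m + t) div (2 * t + 1)"
proof -
  define P where "P = 2 * t + 1"
  define q s where "q = m div P" and "s = m mod P"
  have m: "m = P * q + s" by (simp add: q_def s_def)
  have "s < P" by (simp add: s_def P_def)
  have "2 * m div P = 2 * q + of_bool (t < s) \<and> (m + t) div P = q + of_bool (t < s)"
    using \<open>s < P\<close> by (cases "t < s") (auto intro!: div_nat_eqI simp: m P_def algebra_simps)
  then show ?thesis by (simp add: P_def q_def)
qed

lemma floor2_eq_floor_half: "floor2 x = \<lfloor>(x + 1) / 2\<rfloor>"
proof -
  have "floor2 x = (\<lfloor>x\<rfloor> + 1) div 2"
    unfolding floor2_def using floor_divide_of_int_eq[of "\<lfloor>x\<rfloor> + 1" 2] by simp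
  also have "\<dots> = \<lfloor>(x + 1) / 2\<rfloor>"
    using floor_divide_real_eq_div[of 2 "x + 1"] by simp
  finally show ?thesis .
qed

lemma of_nat_triangle: "real (k * (k - 1) div 2) = real k * (real k - 1) / 2"
  by (cases k) (simp_all add: real_of_nat_div algebra_simps)

definition unitary_summand :: "nat \<Rightarrow> real \<Rightarrow> real" where
  "unitary_summand k P = real_of_int \<lfloor>real k ^ 2 / P\<rfloor>
      + (2 * real k - P) * real_of_int \<lfloor>(real k - 1) / P\<rfloor>
      + (P / 2 - 2 * real k) * real_of_int \<lfloor>(2 * real k - 1) / P\<rfloor>
      - P * (real_of_int \<lfloor>(real k - 1) / P\<rfloor>)^2
      + P / 2 * (real_of_int \<lfloor>(2 * real k - 1) / P\<rfloor>)^2"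

definition orthogonal_summand :: "nat \<Rightarrow> real \<Rightarrow> real" where
  "orthogonal_summand k P = real_of_int \<lfloor>(real k * (real k - 1) / 2) / P\<rfloor>
      - (real k - 1/2) * real_of_int (floor2 ((2 * real k - 3) / P))
      + P / 2 * (real_of_int (floor2 ((2 * real k - 3) / P)))^2"

lemma unitary_summand_eq:
  fixes P k :: nat
  assumes "P > 0" "k > 0"
  shows "unitary_summand k (real P)
    = real (k^2 div P) + (\<Sum>i<k. real (i div P) - real ((k + i) div P))"
proof -
  define S where "S n = (\<Sum>j<n. real (j div P))" for n
  define q1 q2 where "q1 = (k - 1) div P" and "q2 = (2 * k - 1) div P"
  have "real k ^ 2 = real (k ^ 2)" "real k - 1 = real (k - 1)" "2 * real k - 1 = real (2 * k - 1)"
    using assms(2) by (simp_all add: of_nat_diff)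
  then have floors: "\<lfloor>real k ^ 2 / real P\<rfloor> = int (k^2 div P)"
      "\<lfloor>(real k - 1) / real P\<rfloor> = int q1" "\<lfloor>(2 * real k - 1) / real P\<rfloor> = int q2"
    unfolding q1_def q2_def by (simp_all only: floor_divide_of_nat_eq)
  have "2 * S k = real q1 * (2 * real k - real P * (real q1 + 1))"
    "2 * S (2 * k) = real q2 * (2 * real (2 * k) - real P * (real q2 + 1))"
    unfolding S_def q1_def q2_def using sum_lessThan_div_eq[OF assms(1)] by blast+
  moreover have "(\<Sum>i<k. real ((k + i) div P)) = S (2 * k) - S k"
    using sum_lessThan_shift[of "\<lambda>j. real (j div P)" k k] by (simp add: S_def mult_2)
  ultimately show ?thesis
    unfolding unitary_summand_def floors sum_subtractf by (simp add: S_def power2_eq_square algebra_simps)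
qed

lemma orthogonal_summand_eq:
  fixes P k :: nat
  assumes "odd P" "k > 0"
  shows "orthogonal_summand k (real P)
    = real (k * (k - 1) div 2 div P) - (\<Sum>i<k. real (2 * i div P) - real (i div P))"
proof -
  obtain t where P: "P = 2 * t + 1" using assms(1) oddE by blast
  define h where "h = (k + t - 1) div P"
  have floor1: "\<lfloor>(real k * (real k - 1) / 2) / real P\<rfloor> = int (k * (k - 1) div 2 div P)"
    unfolding of_nat_triangle[symmetric] by (rule floor_divide_of_nat_eq)
  have "((2 * real k - 3) / real P + 1) / 2 = real (k + t - 1) / real P"
    using assms(2) by (simp add: P of_nat_diff field_simps)
  then have floor2: "floor2 ((2 * real k - 3) / real P) = int h"
    unfolding floor2_eq_floor_half h_def by (simp only: floor_divide_of_nat_eq)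
  have "(\<Sum>i<k. real (2 * i div P) - real (i div P)) = (\<Sum>i<k. real ((t + i) div P))"
  proof (intro sum.cong refl)
    fix i
    show "real (2 * i div P) - real (i div P) = real ((t + i) div P)"
      using hermite_div_odd[of i t] by (simp add: P add.commute)
  qed
  also have "\<dots> = (\<Sum>j<t + k. real (j div P)) - (\<Sum>j<t. real (j div P))"
    by (rule sum_lessThan_shift)
  also have "(\<Sum>j<t. real (j div P)) = 0"
    by (intro sum.neutral) (simp add: P)
  finally have "(\<Sum>i<k. real (2 * i div P) - real (i div P)) = (\<Sum>j<k + t. real (j div P))"
    by (simp add: add.commute)
  then have "2 * (\<Sum>i<k. real (2 * i div P) - real (i div P))
      = real h * (2 * real (k + t) - real P * (real h + 1))"
    unfolding h_def using sum_lessThan_div_eq[of P "k + t"] P by simp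
  then show ?thesis
    unfolding orthogonal_summand_def floor1 floor2 by (simp add: P power2_eq_square field_simps)
qed

section \<open>Pochhammer symbols and the Gamma products\<close>

lemma Gamma_add_of_nat:
  fixes x :: real
  assumes "x > 0"
  shows "Gamma (x + of_nat n) = pochhammer x n * Gamma x"
proof -
  have "x \<notin> \<int>\<^sub>\<le>\<^sub>0" using assms by (auto elim: nonpos_Ints_cases)
  then show ?thesis using Gamma_real_pos[OF assms] by (simp add: pochhammer_Gamma)
qed

lemma Gamma_ratio_pochhammer:
  fixes x y :: real
  assumes "x > 0" "y > 0"
  shows "Gamma y * Gamma (x + of_nat k) / (Gamma (y + of_nat k) * Gamma x) = pochhammer x k / pochhammer y k"
proof -
  have "Gamma x > 0" "Gamma y > 0" "pochhammer y k > 0"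
    using assms by (simp_all add: pochhammer_pos)
  then show ?thesis
    by (simp add: Gamma_add_of_nat[OF assms(1)] Gamma_add_of_nat[OF assms(2)])
qed

lemma prod_pochhammer_swap:
  fixes x :: "'a :: comm_semiring_1"
  shows "(\<Prod>j<m. pochhammer (x + of_nat j) n) = (\<Prod>i<n. pochhammer (x + of_nat i) m)"
  unfolding pochhammer_prod atLeast0LessThan
  by (subst prod.swap) (simp add: add_ac)

lemma pochhammer_shift_swap:
  "pochhammer x m * pochhammer (x + of_nat m) n = pochhammer x n * pochhammer (x + of_nat n) m"
  by (metis pochhammer_product' add.commute)

lemma fact_mult_pochhammer:
  "fact n * pochhammer (of_nat n + 1) m = (fact (n + m) :: 'a :: {semiring_char_0, comm_semiring_1})"
  using pochhammer_product'[of "1 :: 'a" n m] by (simp add: pochhammer_fact add.commute)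

lemma pochhammer_duplication:
  fixes x :: real
  shows "4 ^ n * pochhammer (x + 1/2) n * pochhammer (x + 1) n = pochhammer (2 * x + 1) (2 * n)"
proof (induction n)
  case (Suc n)
  have "4 ^ Suc n * pochhammer (x + 1/2) (Suc n) * pochhammer (x + 1) (Suc n)
      = (2 * x + 1 + of_nat (Suc (2 * n))) * (2 * x + 1 + of_nat (2 * n))
        * (4 ^ n * pochhammer (x + 1/2) n * pochhammer (x + 1) n)"
    by (simp add: pochhammer_rec' algebra_simps)
  then show ?case by (simp add: Suc.IH pochhammer_rec' del: of_nat_Suc)
qed simp

lemma pochhammer_over_power_tendsto:
  fixes a c :: real
  shows "((\<lambda>N. pochhammer (a * real N + c) n / real N ^ n) \<longlongrightarrow> a ^ n) sequentially"
proof -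
  have "((\<lambda>N. \<Prod>m<n. a + (c + real m) / real N) \<longlongrightarrow> (\<Prod>m<n. a + 0)) sequentially"
    by (intro tendsto_prod tendsto_add tendsto_const lim_const_over_n)
  moreover have "\<forall>\<^sub>F N in sequentially.
      (\<Prod>m<n. a + (c + real m) / real N) = pochhammer (a * real N + c) n / real N ^ n"
    using eventually_gt_at_top[of "0::nat"]
  proof eventually_elim
    case (elim N)
    then have "(\<Prod>m<n. a + (c + real m) / real N) = (\<Prod>m<n. (a * real N + c + real m) / real N)"
      by (intro prod.cong) (auto simp: field_simps)
    then show ?case by (simp add: prod_dividef pochhammer_prod atLeast0LessThan add.assoc)
  qed
  ultimately show ?thesis by (simp add: tendsto_cong)
qed

lemma prod_Gamma_unitary:
  fixes N k :: nat
  shows "(\<Prod>j=1..N. Gamma (real j) * Gamma (real j + 2 * real k) / (Gamma (real j + real k))^2)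
    = (\<Prod>i<k. pochhammer (real N + (real i + 1)) k / pochhammer (real i + 1) k)"
proof -
  have factor: "Gamma (real (Suc j)) * Gamma (real (Suc j) + 2 * real k) / (Gamma (real (Suc j) + real k))^2
      = pochhammer (real (Suc j) + real k) k / pochhammer (real (Suc j)) k" for j
  proof -
    have "real (Suc j) + 2 * real k = (real (Suc j) + real k) + real k" by simp
    then show ?thesis
      unfolding power2_eq_square by (simp only:) (rule Gamma_ratio_pochhammer; simp)
  qed
  have "(\<Prod>j=1..N. Gamma (real j) * Gamma (real j + 2 * real k) / (Gamma (real j + real k))^2)
      = (\<Prod>j<N. pochhammer (real k + 1 + real j) k) / (\<Prod>j<N. pochhammer (1 + real j) k)"
    unfolding One_nat_def prod.atLeast1_atMost_eq factor by (simp add: prod_dividef add_ac)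
  also have "\<dots> = (\<Prod>i<k. pochhammer (real k + 1 + real i) N) / (\<Prod>i<k. pochhammer (1 + real i) N)"
    by (simp only: prod_pochhammer_swap[where x = "real k + 1" and m = N and n = k]
        prod_pochhammer_swap[where x = 1 and m = N and n = k])
  also have "\<dots> = (\<Prod>i<k. pochhammer (real N + (real i + 1)) k / pochhammer (real i + 1) k)"
    unfolding prod_dividef[symmetric]
  proof (intro prod.cong refl)
    fix i
    have "pochhammer (real i + 1) k * pochhammer (real i + 1 + real k) N
        = pochhammer (real i + 1) N * pochhammer (real i + 1 + real N) k"
      by (rule pochhammer_shift_swap)
    moreover have "pochhammer (real i + 1) k > 0" "pochhammer (real i + 1) N > 0"
      by (simp_all add: pochhammer_pos)
    ultimately show "pochhammer (real k + 1 + real i) N / pochhammer (1 + real i) N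
        = pochhammer (real N + (real i + 1)) k / pochhammer (real i + 1) k"
      by (simp add: field_simps add_ac)
  qed
  finally show ?thesis .
qed

lemma prod_Gamma_orthogonal:
  fixes N k :: nat
  assumes "N \<ge> 1"
  shows "(\<Prod>j=1..N. Gamma (real N + real j - 1) * Gamma (real j - 1/2 + real k)
                 / (Gamma (real N + real j - 1 + real k) * Gamma (real j - 1/2)))
    = (\<Prod>i<k. pochhammer (real i + 1/2) N / pochhammer (real N + real i) N)"
proof -
  have factor: "Gamma (real N + real (Suc j) - 1) * Gamma (real (Suc j) - 1/2 + real k)
      / (Gamma (real N + real (Suc j) - 1 + real k) * Gamma (real (Suc j) - 1/2))
      = pochhammer (1/2 + real j) k / pochhammer (real N + real j) k" for j
    using Gamma_ratio_pochhammer[of "real (Suc j) - 1/2" "real N + real (Suc j) - 1" k] assms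
    by (simp add: algebra_simps)
  have "(\<Prod>j=1..N. Gamma (real N + real j - 1) * Gamma (real j - 1/2 + real k)
                 / (Gamma (real N + real j - 1 + real k) * Gamma (real j - 1/2)))
      = (\<Prod>j<N. pochhammer (1/2 + real j) k) / (\<Prod>j<N. pochhammer (real N + real j) k)"
    unfolding One_nat_def prod.atLeast1_atMost_eq prod_dividef[symmetric] factor ..
  also have "\<dots> = (\<Prod>i<k. pochhammer (1/2 + real i) N) / (\<Prod>i<k. pochhammer (real N + real i) N)"
    by (simp only: prod_pochhammer_swap[where x = "1/2" and m = N and n = k]
        prod_pochhammer_swap[where x = "real N" and m = N and n = k])
  finally show ?thesis by (simp add: prod_dividef add.commute)
qed

lemma pochhammer_half_quotient_eq:
  fixes N i :: nat
  assumes "N > 0"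
  shows "4 ^ N * pochhammer (real i + 1/2) N / pochhammer (real N + real i) N
    = (2 * real N + real i) / (real N + real i) * pochhammer (2 * real N + (real i + 1)) i
      / pochhammer (real i + 1) i"
proof -
  define x where "x = real i + 1"
  define A where "A = 4 ^ N * pochhammer (real i + 1/2) N"
  define C where "C = pochhammer (real N + real i + 1) N"
  define D where "D = pochhammer (real N + real i) N"
  define E where "E = pochhammer (2 * real N + (real i + 1)) i"
  have pos: "pochhammer x N > 0" "pochhammer x i > 0" "D > 0" "real N + real i > 0"
    using assms by (simp_all add: x_def D_def pochhammer_pos)
  have "pochhammer x i * (A * pochhammer x N) = pochhammer x i * pochhammer (x + real i) (2 * N)"
    unfolding A_def x_def using pochhammer_duplication[where x = "real i" and n = N]
    by (simp add: algebra_simps)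
  also have "\<dots> = pochhammer x (2 * N) * E"
    using pochhammer_shift_swap[of x i "2 * N"] by (simp add: E_def x_def algebra_simps)
  also have "pochhammer x (2 * N) = pochhammer x N * C"
    using pochhammer_product'[of x N N] by (simp only: mult_2) (simp add: C_def x_def algebra_simps)
  finally have "A * pochhammer x i = C * E"
    using pos by (simp add: algebra_simps)
  moreover have "C * (real N + real i) = D * (2 * real N + real i)"
    unfolding C_def D_def
    using pochhammer_rec[of "real N + real i" N] pochhammer_rec'[of "real N + real i" N]
    by (simp add: algebra_simps)
  ultimately have "A * pochhammer x i * (real N + real i) = D * (2 * real N + real i) * E"
    by (metis mult.commute mult.assoc)
  then show ?thesis
    using pos unfolding E_def[symmetric] unfolding A_def[symmetric] D_def[symmetric] x_def[symmetric]
    by (simp add: frac_eq_eq mult_ac)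
qed

lemma unitary_sequence_eq:
  fixes N k :: nat
  assumes "N > 0"
  shows "real N powr (- (real k ^ 2)) *
      (\<Prod>j=1..N. Gamma (real j) * Gamma (real j + 2 * real k) / (Gamma (real j + real k))^2)
    = (\<Prod>i<k. pochhammer (real N + (real i + 1)) k / real N ^ k / pochhammer (real i + 1) k)"
proof -
  have "real N powr (- (real k ^ 2)) = (\<Prod>i<k. 1 / real N ^ k)"
    using assms by (simp add: powr_minus_divide powr_realpow power_mult power2_eq_square
        power_one_over flip: of_nat_mult)
  moreover have "(\<Prod>i<k. pochhammer (real N + (real i + 1)) k / real N ^ k / pochhammer (real i + 1) k)
      = (\<Prod>i<k. 1 / real N ^ k) * (\<Prod>i<k. pochhammer (real N + (real i + 1)) k / pochhammer (real i + 1) k)"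
    unfolding prod.distrib[symmetric] by (intro prod.cong) auto
  ultimately show ?thesis
    unfolding prod_Gamma_unitary by simp
qed

lemma orthogonal_sequence_eq:
  fixes N k :: nat
  assumes "N > 0"
  shows "real N powr (- (real k * (real k - 1) / 2)) * 2 powr (2 * real N * real k) *
      (\<Prod>j=1..N. Gamma (real N + real j - 1) * Gamma (real j - 1/2 + real k)
                 / (Gamma (real N + real j - 1 + real k) * Gamma (real j - 1/2)))
    = (\<Prod>i<k. (2 * real N + real i) / (real N + real i)
        * (pochhammer (2 * real N + (real i + 1)) i / real N ^ i) / pochhammer (real i + 1) i)"
proof -
  have "(\<Sum>i<k. i) = k * (k - 1) div 2"
    using Sum_Ico_nat[of 0 k] by (simp add: atLeast0LessThan)
  then have "real k * (real k - 1) / 2 = real (\<Sum>i<k. i)"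
    by (simp only: of_nat_triangle)
  also have "real N powr \<dots> = (\<Prod>i<k. real N ^ i)"
    using assms by (simp only: powr_realpow of_nat_0_less_iff power_sum)
  finally have "real N powr (- (real k * (real k - 1) / 2)) = 1 / (\<Prod>i<k. real N ^ i)"
    by (simp add: powr_minus_divide)
  moreover have "(2::real) powr (2 * real N * real k) = (\<Prod>i<k. 4 ^ N)"
    using powr_realpow[of 2 "2 * N * k"] by (simp add: power_mult)
  moreover have "(\<Prod>i<k. (2 * real N + real i) / (real N + real i)
        * (pochhammer (2 * real N + (real i + 1)) i / real N ^ i) / pochhammer (real i + 1) i)
      = (\<Prod>i<k. 4 ^ N * pochhammer (real i + 1/2) N / pochhammer (real N + real i) N / real N ^ i)"
    unfolding pochhammer_half_quotient_eq[OF assms] by (intro prod.cong refl) (simp add: mult_ac)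
  moreover have "\<dots> = (\<Prod>i<k. 4 ^ N) * (\<Prod>i<k. pochhammer (real i + 1/2) N / pochhammer (real N + real i) N)
      / (\<Prod>i<k. real N ^ i)"
    unfolding prod_dividef[symmetric] prod.distrib[symmetric] by (intro prod.cong) auto
  ultimately show ?thesis
    using assms prod_Gamma_orthogonal[of N k] by simp
qed

lemma G_U_of_nat: "G_U (real k) = (\<Prod>i<k. 1 / pochhammer (real i + 1) k)"
proof -
  have "((\<lambda>N. \<Prod>i<k. pochhammer (real N + (real i + 1)) k / real N ^ k / pochhammer (real i + 1) k)
      \<longlongrightarrow> (\<Prod>i<k. 1 / pochhammer (real i + 1) k)) sequentially"
    using pochhammer_over_power_tendsto[of 1]
    by (intro tendsto_prod tendsto_divide tendsto_const) (simp_all add: pochhammer_pos less_imp_neq[symmetric])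
  then show ?thesis
    unfolding G_U_def
    by (rule limI [OF Lim_transform_eventually], intro eventually_mono[OF eventually_gt_at_top[of 0]])
      (simp only: unitary_sequence_eq)
qed

lemma G_O_of_nat: "G_O (real k) = 1/2 * (\<Prod>i<k. 2 ^ Suc i / pochhammer (real i + 1) i)"
proof -
  have "((\<lambda>N. (2 * real N + real i) / (real N + real i)) \<longlongrightarrow> 2) sequentially" for i
    by real_asymp
  then have "((\<lambda>N. \<Prod>i<k. (2 * real N + real i) / (real N + real i)
        * (pochhammer (2 * real N + (real i + 1)) i / real N ^ i) / pochhammer (real i + 1) i)
      \<longlongrightarrow> (\<Prod>i<k. 2 * 2 ^ i / pochhammer (real i + 1) i)) sequentially"
    using pochhammer_over_power_tendsto[of 2]
    by (intro tendsto_prod tendsto_divide tendsto_mult tendsto_const)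
      (simp_all add: pochhammer_pos less_imp_neq[symmetric])
  then have "lim (\<lambda>N. real N powr (- (real k * (real k - 1) / 2)) * 2 powr (2 * real N * real k) *
      (\<Prod>j=1..N. Gamma (real N + real j - 1) * Gamma (real j - 1/2 + real k)
                 / (Gamma (real N + real j - 1 + real k) * Gamma (real j - 1/2))))
      = (\<Prod>i<k. 2 * 2 ^ i / pochhammer (real i + 1) i)"
    by (rule limI [OF Lim_transform_eventually], intro eventually_mono[OF eventually_gt_at_top[of 0]])
      (simp only: orthogonal_sequence_eq)
  then show ?thesis
    unfolding G_O_def by simp
qed

lemma g_U_of_nat: "g_U (real k) = fact (k^2) * (\<Prod>i<k. fact i / fact (k + i))"
proof -
  have "Gamma (1 + B_U (real k)) = fact (k^2)"
    using Gamma_fact[of "k^2"] by (simp add: B_U_def)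
  moreover have "1 / pochhammer (real i + 1) k = fact i / fact (k + i)" for i
  proof -
    have "fact (k + i) = fact i * pochhammer (real i + 1) k"
      using fact_mult_pochhammer[of i k, where 'a = real] by (simp add: add.commute)
    then show ?thesis by simp
  qed
  ultimately show ?thesis by (simp add: g_U_def G_U_of_nat)
qed

lemma g_O_of_nat:
  "g_O (real k) = fact (k * (k - 1) div 2) * (\<Prod>i<k. 2 ^ Suc i * fact i / fact (2 * i)) / 2"
proof -
  have "Gamma (1 + B_O (real k)) = fact (k * (k - 1) div 2)"
    unfolding B_O_def of_nat_triangle[symmetric] by (rule Gamma_fact)
  moreover have "2 ^ Suc i / pochhammer (real i + 1) i = 2 ^ Suc i * fact i / fact (2 * i)" for i
  proof -
    have "fact (2 * i) = fact i * pochhammer (real i + 1) i"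
      using fact_mult_pochhammer[of i i, where 'a = real] unfolding mult_2 by (rule sym)
    then show ?thesis by simp
  qed
  ultimately show ?thesis by (simp add: g_O_def G_O_of_nat)
qed

section \<open>The valuations of \<open>g_U\<close> and \<open>g_O\<close>\<close>

lemma of_rat_fact: "of_rat (fact n) = (fact n :: 'a :: field_char_0)"
  by (metis of_nat_fact of_rat_of_nat_eq)

lemma vp_g_U_series:
  assumes "prime p" "k > 0"
  shows "\<exists>q::rat. q \<noteq> 0 \<and> real_of_rat q = g_U (real k) \<and>
    (\<lambda>l. unitary_summand k (real p ^ Suc l)) sums real_of_int (vp p q)"
proof (intro exI conjI)
  define q :: rat where "q = fact (k^2) * (\<Prod>i<k. fact i / fact (k + i))"
  show "q \<noteq> 0" by (simp add: q_def)
  show "real_of_rat q = g_U (real k)"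
    by (simp add: q_def g_U_of_nat of_rat_mult of_rat_prod of_rat_divide of_rat_fact)
  have "vp p q = vp p (fact (k^2)) + (\<Sum>i<k. vp p (fact i) - vp p (fact (k + i)))"
    using assms(1) by (simp add: q_def vp_mult vp_prod vp_divide)
  moreover have "(\<lambda>l. real (k^2 div p ^ Suc l) + (\<Sum>i<k. real (i div p ^ Suc l) - real ((k + i) div p ^ Suc l)))
      sums real_of_int (vp p (fact (k^2)) + (\<Sum>i<k. vp p (fact i) - vp p (fact (k + i))))"
    unfolding of_int_add of_int_sum of_int_diff
    by (intro sums_add sums_sum sums_diff vp_fact_sums assms(1))
  moreover have "unitary_summand k (real p ^ Suc l)
      = real (k^2 div p ^ Suc l) + (\<Sum>i<k. real (i div p ^ Suc l) - real ((k + i) div p ^ Suc l))" for l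
    using unitary_summand_eq[of "p ^ Suc l" k] prime_gt_0_nat[OF assms(1)] assms(2)
    by (simp only: of_nat_power zero_less_power)
  ultimately show "(\<lambda>l. unitary_summand k (real p ^ Suc l)) sums real_of_int (vp p q)"
    by simp
qed

lemma vp_g_O_series:
  assumes "prime p" "odd p" "k > 0"
  shows "\<exists>q::rat. q \<noteq> 0 \<and> real_of_rat q = g_O (real k) \<and>
    (\<lambda>l. orthogonal_summand k (real p ^ Suc l)) sums real_of_int (vp p q)"
proof (intro exI conjI)
  define T where "T = k * (k - 1) div 2"
  define q :: rat where "q = fact T * (\<Prod>i<k. 2 ^ Suc i * fact i / fact (2 * i)) / 2"
  show "q \<noteq> 0" by (simp add: q_def)
  show "real_of_rat q = g_O (real k)"
    by (simp add: q_def T_def g_O_of_nat of_rat_mult of_rat_prod of_rat_divide of_rat_fact of_rat_power)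
  have "vp p q = vp p (fact T) - (\<Sum>i<k. vp p (fact (2 * i)) - vp p (fact i))"
    using assms(1) vp_power_two[OF assms(1,2)] vp_power_two[OF assms(1,2), of 1]
    by (simp add: q_def vp_mult vp_prod vp_divide sum_subtractf)
  moreover have "(\<lambda>l. real (T div p ^ Suc l) - (\<Sum>i<k. real (2 * i div p ^ Suc l) - real (i div p ^ Suc l)))
      sums real_of_int (vp p (fact T) - (\<Sum>i<k. vp p (fact (2 * i)) - vp p (fact i)))"
    unfolding of_int_sum of_int_diff
    by (intro sums_sum sums_diff vp_fact_sums assms(1))
  moreover have "orthogonal_summand k (real p ^ Suc l)
      = real (T div p ^ Suc l) - (\<Sum>i<k. real (2 * i div p ^ Suc l) - real (i div p ^ Suc l))" for l
    using orthogonal_summand_eq[of "p ^ Suc l" k] assms(2,3) unfolding T_def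
    by (simp add: even_power)
  ultimately show "(\<lambda>l. orthogonal_summand k (real p ^ Suc l)) sums real_of_int (vp p q)"
    by simp
qed

theorem proposition5p4:
  fixes p k :: nat
  assumes "prime p" and "odd p" and "k > 0"
  shows "(\<exists>q::rat. q \<noteq> 0 \<and> real_of_rat q = g_U (real k) \<and>
           (\<lambda>l. let P = real p ^ Suc l in
              real_of_int \<lfloor>real k ^ 2 / P\<rfloor>
              + (2 * real k - P) * real_of_int \<lfloor>(real k - 1) / P\<rfloor>
              + (P / 2 - 2 * real k) * real_of_int \<lfloor>(2 * real k - 1) / P\<rfloor>
              - P * (real_of_int \<lfloor>(real k - 1) / P\<rfloor>)^2
              + P / 2 * (real_of_int \<lfloor>(2 * real k - 1) / P\<rfloor>)^2)
           sums real_of_int (vp p q))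
       \<and> (\<exists>q::rat. q \<noteq> 0 \<and> real_of_rat q = g_O (real k) \<and>
           (\<lambda>l. let P = real p ^ Suc l in
              real_of_int \<lfloor>(real k * (real k - 1) / 2) / P\<rfloor>
              - (real k - 1/2) * real_of_int (floor2 ((2 * real k - 3) / P))
              + P / 2 * (real_of_int (floor2 ((2 * real k - 3) / P)))^2)
           sums real_of_int (vp p q))"
  using vp_g_U_series[OF assms(1,3)] vp_g_O_series[OF assms]
  unfolding unitary_summand_def orthogonal_summand_def Let_def by (rule conjI)

end
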